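(* Under the hypotheses of the context (in particular $A$ is $(c_A,\gamma_{sys})$-SED, $B$ is $(c_B,\gamma_{sys})$-SED with $c_A,c_B\ge1$, $K\in\mathcal{K}^\kappa$ is $(c_K,\gamma_{sys})$-SED and $A+BK$ is $(\tau,\rho)$-stable), let $P_i$ solve $P_i = S_i + [K]_{i:}^\top [R]_{ii}[K]_{i:} + (A+BK)^\top P_i (A+BK)$ and define $$H_{i11}=S_i + A^\top P_i A,\quad H_{i12}=A^\top P_i B,\quad H_{i22}=R_i + B^\top P_i B.$$ Then each of $H_{i11}$, $H_{i12}$, $H_{i22}$ is $(c_{H_i},\gamma_{P_i})$-SED away from $i$, where $$c_{H_i}=\max\big(\|S_i\| + N^2 c_A^2 c_{P_i},\; N^2 c_A c_B c_{P_i},\; \|R_i\| + N^2 c_B^2 c_{P_i}\big),$$ with $$c_{P_i} = \frac{\|S_i + [K]_{i:}^\top [R]_{ii}[K]_{i:}\|\,\tau^2}{1-e^{-2\rho}} + 2\big(\|[S]_{ii}\| + \|[R]_{ii}\|c_K^2\big),\qquad \gamma_{P_i} = \frac{\rho\,\gamma_{sys}}{\rho + \ln(N c_A + N^2 c_B c_K)}.$$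
   Context: $\|\cdot\|$ denotes the Euclidean norm / induced $\ell_2$ matrix norm. There are $N$ agents $[N]$ on an undirected graph with graph distance $\mathrm{dist}$ ($\mathrm{dist}(i,i)=0$, symmetric, triangle inequality). Agent $i$ has state dimension $n_i$ and input dimension $m_i$, $n=\sum_i n_i$, $m=\sum_i m_i$; matrices are partitioned into blocks $[X]_{lj}$ (rows of agent $l$, columns of agent $j$, using the $n$- or $m$-partition as appropriate); $[X]_{i:}$ is agent $i$'s block row. $A\in\mathbb{R}^{n\times n}$, $B\in\mathbb{R}^{n\times m}$, $\gamma_{sys}>0$, $\kappa\ge1$, $\mathcal{N}_i^\kappa=\{j:\mathrm{dist}(i,j)<\kappa\}$, $\mathcal{K}^\kappa=\{K\in\mathbb{R}^{m\times n}:[K]_{ij}=0 \text{ if } j\notin\mathcal{N}_i^\kappa\}$. $S$, $R$ are block-diagonal with $[S]_{ii}\succeq0$, $[R]_{ii}\succ0$; $S_i$ (resp. $R_i$) is $S$ (resp. $R$) with all blocks except the $(i,i)$ block set to zero. Definitions: $X$ is $(\tau,\rho)$-stable if $\|X^k\|\le\tau e^{-\rho k}$ for all $k\ge0$; $X$ is $(c,\gamma)$-SED if $\|[X]_{lj}\|\le c e^{-\gamma\,\mathrm{dist}(l,j)}$ for all $l,j$; $X$ is $(c,\gamma)$-SED away from $i$ if $\|[X]_{lj}\|\le c e^{-\gamma\max(\mathrm{dist}(i,l),\mathrm{dist}(i,j))}$ for all $l,j$. *)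

theory Defs
  imports "HOL-Analysis.Analysis"
begin

text \<open>Matrices are HOL-Analysis matrices; coordinates are partitioned among agents
  (type 'a) by an agent-assignment function for the row index type and one for the
  column index type.\<close>

definition opnorm :: "real^'c^'r \<Rightarrow> real" where
  "opnorm X = onorm (\<lambda>x. X *v x)"

primrec matpow :: "real^'n^'n \<Rightarrow> nat \<Rightarrow> real^'n^'n" where
  "matpow X 0 = mat 1"
| "matpow X (Suc k) = X ** matpow X k"

text \<open>Block (l,j) of X, padded with zeros (the zero padding does not change the
  induced 2-norm).\<close>
definition blk :: "('r \<Rightarrow> 'a) \<Rightarrow> ('c \<Rightarrow> 'a) \<Rightarrow> real^'c^'r \<Rightarrow> 'a \<Rightarrow> 'a \<Rightarrow> real^'c^'r" where
  "blk ra ca X l j = (\<chi> r c. if ra r = l \<and> ca c = j then X $ r $ c else 0)"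

definition blkrow :: "('r \<Rightarrow> 'a) \<Rightarrow> real^'c^'r \<Rightarrow> 'a \<Rightarrow> real^'c^'r" where
  "blkrow ra X i = (\<chi> r c. if ra r = i then X $ r $ c else 0)"

definition stable :: "real \<Rightarrow> real \<Rightarrow> real^'n^'n \<Rightarrow> bool" where
  "stable \<tau> \<rho> X \<longleftrightarrow> (\<forall>k::nat. opnorm (matpow X k) \<le> \<tau> * exp (- \<rho> * real k))"

definition SED :: "('a \<Rightarrow> 'a \<Rightarrow> nat) \<Rightarrow> ('r \<Rightarrow> 'a) \<Rightarrow> ('c \<Rightarrow> 'a) \<Rightarrow> real \<Rightarrow> real \<Rightarrow> real^'c^'r \<Rightarrow> bool" where
  "SED d ra ca c \<gamma> X \<longleftrightarrow>
     (\<forall>l j. opnorm (blk ra ca X l j) \<le> c * exp (- \<gamma> * real (d l j)))"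

definition SED_away :: "('a \<Rightarrow> 'a \<Rightarrow> nat) \<Rightarrow> ('r \<Rightarrow> 'a) \<Rightarrow> ('c \<Rightarrow> 'a) \<Rightarrow> 'a \<Rightarrow> real \<Rightarrow> real \<Rightarrow> real^'c^'r \<Rightarrow> bool" where
  "SED_away d ra ca i c \<gamma> X \<longleftrightarrow>
     (\<forall>l j. opnorm (blk ra ca X l j) \<le> c * exp (- \<gamma> * real (max (d i l) (d i j))))"

definition in_Kkappa :: "('a \<Rightarrow> 'a \<Rightarrow> nat) \<Rightarrow> ('m \<Rightarrow> 'a) \<Rightarrow> ('n \<Rightarrow> 'a) \<Rightarrow> nat \<Rightarrow> real^'n^'m \<Rightarrow> bool" where
  "in_Kkappa d agu agx \<kappa> K \<longleftrightarrow> (\<forall>r c. \<kappa> \<le> d (agu r) (agx c) \<longrightarrow> K $ r $ c = 0)"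

definition block_diag :: "('n \<Rightarrow> 'a) \<Rightarrow> real^'n^'n \<Rightarrow> bool" where
  "block_diag ag X \<longleftrightarrow> (\<forall>r c. ag r \<noteq> ag c \<longrightarrow> X $ r $ c = 0)"

definition block_psd :: "('n \<Rightarrow> 'a) \<Rightarrow> real^'n^'n \<Rightarrow> 'a \<Rightarrow> bool" where
  "block_psd ag X i \<longleftrightarrow>
     (\<forall>r c. ag r = i \<and> ag c = i \<longrightarrow> X $ r $ c = X $ c $ r) \<and>
     (\<forall>x. (\<forall>c. ag c \<noteq> i \<longrightarrow> x $ c = 0) \<longrightarrow> 0 \<le> x \<bullet> (X *v x))"

definition block_pd :: "('n \<Rightarrow> 'a) \<Rightarrow> real^'n^'n \<Rightarrow> 'a \<Rightarrow> bool" where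
  "block_pd ag X i \<longleftrightarrow>
     (\<forall>r c. ag r = i \<and> ag c = i \<longrightarrow> X $ r $ c = X $ c $ r) \<and>
     (\<forall>x. (\<forall>c. ag c \<noteq> i \<longrightarrow> x $ c = 0) \<and> x \<noteq> 0 \<longrightarrow> 0 < x \<bullet> (X *v x))"

end

theory Submission
  imports Defs
begin

text \<open>
  Write M = A + BK. Sums of SED matrices add their constants and products multiply them, with
  a factor N from the sum over the intermediate agent, without losing the rate (triangle
  inequality); hence M^k is ((N c_M)^k, gamma_sys)-SED with c_M = c_A + N c_B c_K. Unrolling
  the Lyapunov equation gives P_i = sum_k (M^k)^T Q_i M^k with Q_i = S_i + [K]_i:^T [R]_ii [K]_i:.
  As Q_i only involves agent i, block (l, j) of the k-th term is at most
  (|S_i| + |R_i| c_K^2) (N c_M)^(2k) e^(-gamma_sys (dist(i,l) + dist(i,j))), while by stability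
  the whole term has norm at most |Q_i| tau^2 e^(-2 rho k). Cut the series at
  k_0 = ceil(gamma_P D / (2 rho)), D = max(dist(i,l), dist(i,j)): the head is at most twice its
  last term (N c_M >= 2 as soon as D > 0) and the tail at most
  |Q_i| tau^2 e^(-2 rho k_0) / (1 - e^(-2 rho)); gamma_P is the rate for which both are bounded
  by multiples of e^(-gamma_P D). The H blocks sandwich P_i between the SED matrices A and B,
  which keeps the decay away from i, at rate gamma_P <= gamma_sys, at the cost of a factor N^2.
\<close>

section \<open>Operator norm of matrices\<close>

lemma opnorm_nonneg: "0 \<le> opnorm X"
  unfolding opnorm_def by (rule onorm_pos_le) simp

lemma opnorm_mult_vec_le: "norm (X *v x) \<le> opnorm X * norm x"
  unfolding opnorm_def by (rule onorm) simp

lemma opnorm_le: "0 \<le> b \<Longrightarrow> (\<And>x. norm (X *v x) \<le> b * norm x) \<Longrightarrow> opnorm X \<le> b"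
  unfolding opnorm_def by (rule onorm_bound)

lemma opnorm_zero [simp]: "opnorm 0 = 0"
  by (simp add: opnorm_def onorm_zero)

lemma opnorm_add: "opnorm (X + Y) \<le> opnorm X + opnorm Y"
  unfolding opnorm_def matrix_vector_mult_add_rdistrib by (rule onorm_triangle) simp_all

lemma opnorm_sum: "opnorm (sum f S) \<le> (\<Sum>s\<in>S. opnorm (f s))"
proof (induction S rule: infinite_finite_induct)
  case (insert s S)
  then show ?case
    using opnorm_add[of "f s" "sum f S"] by simp
qed simp_all

lemma opnorm_mult: "opnorm (X ** Y) \<le> opnorm X * opnorm Y"
proof -
  have "opnorm (X ** Y) = onorm ((\<lambda>x. X *v x) \<circ> (\<lambda>x. Y *v x))"
    by (simp add: opnorm_def o_def matrix_vector_mul_assoc)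
  also have "\<dots> \<le> opnorm X * opnorm Y"
    unfolding opnorm_def by (rule onorm_compose) simp_all
  finally show ?thesis .
qed

lemma opnorm_transpose_le: "opnorm (transpose X) \<le> opnorm X"
proof (rule opnorm_le[OF opnorm_nonneg])
  fix x
  let ?y = "transpose X *v x"
  have "norm ?y * norm ?y = (x v* X) \<bullet> ?y"
    by (simp add: vector_transpose_matrix flip: power2_eq_square power2_norm_eq_inner)
  also have "\<dots> = x \<bullet> (X *v ?y)"
    by (rule dot_lmul_matrix)
  also have "\<dots> \<le> norm x * (opnorm X * norm ?y)"
    by (rule order_trans[OF norm_cauchy_schwarz mult_left_mono[OF opnorm_mult_vec_le norm_ge_zero]])
  finally have "norm ?y * norm ?y \<le> (opnorm X * norm x) * norm ?y"
    by (simp only: ac_simps)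
  then show "norm ?y \<le> opnorm X * norm x"
    using opnorm_nonneg[of X] by (cases "norm ?y = 0") (simp_all add: mult_le_cancel_right)
qed

lemma opnorm_transpose [simp]: "opnorm (transpose X) = opnorm X"
  using opnorm_transpose_le[of X] opnorm_transpose_le[of "transpose X"] by simp

lemma opnorm_transpose_mult3_le:
  assumes "opnorm X \<le> x" and "opnorm Y \<le> y" and "opnorm Z \<le> z"
  shows "opnorm (transpose X ** Y ** Z) \<le> x * y * z"
proof -
  have "opnorm (transpose X ** Y ** Z) \<le> opnorm (transpose X ** Y) * opnorm Z"
    by (rule opnorm_mult)
  also have "\<dots> \<le> opnorm X * opnorm Y * opnorm Z"
    using opnorm_mult[of "transpose X" Y] by (intro mult_right_mono opnorm_nonneg) simp
  also have "\<dots> \<le> x * y * z"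
    using assms opnorm_nonneg[of X] opnorm_nonneg[of Y] opnorm_nonneg[of Z]
    by (intro mult_mono mult_nonneg_nonneg) auto
  finally show ?thesis .
qed

lemma nonneg_if_opnorm_le_mult_exp:
  assumes "opnorm X \<le> c * exp t"
  shows "0 \<le> c"
proof -
  have "0 \<le> c * exp t"
    using order_trans[OF opnorm_nonneg assms] .
  then show ?thesis
    by (simp add: zero_le_mult_iff)
qed

section \<open>Agent blocks\<close>

definition agent_proj :: "('r \<Rightarrow> 'a) \<Rightarrow> 'a \<Rightarrow> real^'r^'r" where
  "agent_proj ag l = (\<chi> r c. if r = c then of_bool (ag r = l) else 0)"

lemma agent_proj_mult_left: "agent_proj ag l ** X = (\<chi> r c. if ag r = l then X $ r $ c else 0)"
  by (simp add: agent_proj_def matrix_matrix_mult_def vec_eq_iff if_distrib if_distribR cong: if_cong)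

lemma agent_proj_mult_right: "X ** agent_proj ag l = (\<chi> r c. if ag c = l then X $ r $ c else 0)"
  by (simp add: agent_proj_def matrix_matrix_mult_def vec_eq_iff if_distrib if_distribR cong: if_cong)

lemma opnorm_agent_proj_le: "opnorm (agent_proj ag l) \<le> 1"
proof (rule opnorm_le)
  fix x
  have "agent_proj ag l *v x = (\<chi> r. if ag r = l then x $ r else 0)"
    by (simp add: agent_proj_def matrix_vector_mult_def vec_eq_iff if_distrib if_distribR
        cong: if_cong)
  then show "norm (agent_proj ag l *v x) \<le> 1 * norm x"
    by (auto intro: norm_le_componentwise_cart)
qed simp

lemma transpose_agent_proj [simp]: "transpose (agent_proj ag l) = agent_proj ag l"
  by (auto simp: agent_proj_def transpose_def vec_eq_iff)

lemma agent_proj_mult_agent_proj: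
  "agent_proj ag l ** agent_proj ag j = (if l = j then agent_proj ag l else 0)"
  unfolding agent_proj_mult_left by (auto simp: agent_proj_def vec_eq_iff)

lemma agent_proj_idem [simp]: "agent_proj ag l ** agent_proj ag l = agent_proj ag l"
  by (simp add: agent_proj_mult_agent_proj)

lemma mult_agent_proj_idem [simp]: "X ** agent_proj ag l ** agent_proj ag l = X ** agent_proj ag l"
  by (simp flip: matrix_mul_assoc)

lemma sum_agent_proj: "(\<Sum>p\<in>UNIV. agent_proj (ag :: 'r::finite \<Rightarrow> 'a::finite) p) = mat 1"
  by (simp add: agent_proj_def mat_def vec_eq_iff)

lemma blk_eq_agent_proj: "blk ra ca X l j = agent_proj ra l ** X ** agent_proj ca j"
  by (simp add: blk_def agent_proj_mult_left agent_proj_mult_right vec_eq_iff)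

lemma blkrow_eq_agent_proj: "blkrow ra X i = agent_proj ra i ** X"
  by (simp add: blkrow_def agent_proj_mult_left vec_eq_iff)

lemma blk_add: "blk ra ca (X + Y) l j = blk ra ca X l j + blk ra ca Y l j"
  by (simp add: blk_def vec_eq_iff)

lemma blk_sum: "blk ra ca (sum f S) l j = (\<Sum>s\<in>S. blk ra ca (f s) l j)"
  by (induction S rule: infinite_finite_induct) (auto simp: blk_add blk_def vec_eq_iff)

lemma blk_transpose: "blk ca ra (transpose X) l j = transpose (blk ra ca X j l)"
  by (simp add: blk_def transpose_def vec_eq_iff)

lemma blk_blk: "blk ra ra (blk ra ra X i i) l j = (if l = i \<and> j = i then blk ra ra X i i else 0)"
  by (auto simp: blk_def vec_eq_iff)

lemma blk_mat1: "blk ag ag (mat 1) l j = (if l = j then agent_proj ag l else 0)"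
  by (simp add: blk_eq_agent_proj agent_proj_mult_agent_proj)

lemma opnorm_blk_le: "opnorm (blk ra ca X l j) \<le> opnorm X"
proof -
  have "opnorm (blk ra ca X l j) \<le> opnorm (agent_proj ra l) * opnorm X * opnorm (agent_proj ca j)"
    unfolding blk_eq_agent_proj
    by (meson opnorm_mult opnorm_nonneg mult_right_mono order_trans)
  also have "\<dots> \<le> 1 * opnorm X * 1"
    by (intro mult_mono opnorm_agent_proj_le) (auto simp: opnorm_nonneg)
  finally show ?thesis by simp
qed

lemma matrix_add_rdistrib: "(X + Y) ** Z = X ** Z + Y ** Z"
  by (simp add: matrix_matrix_mult_def vec_eq_iff sum.distrib distrib_right)

lemma matrix_mult_sum_left: "X ** sum f S = (\<Sum>s\<in>S. X ** f s)"
  by (induction S rule: infinite_finite_induct) (auto simp: matrix_add_ldistrib)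

lemma matrix_mult_sum_right: "sum f S ** X = (\<Sum>s\<in>S. f s ** X)"
  by (induction S rule: infinite_finite_induct) (auto simp: matrix_add_rdistrib)

lemma blk_mult:
  fixes X :: "real^'m::finite^'r" and Y :: "real^'c^'m" and mb :: "'m \<Rightarrow> 'a::finite"
  shows "blk ra ca (X ** Y) l j = (\<Sum>p\<in>UNIV. blk ra mb X l p ** blk mb ca Y p j)"
proof -
  have "X ** Y = (\<Sum>p\<in>UNIV. X ** agent_proj mb p ** Y)"
    by (simp flip: matrix_mult_sum_left matrix_mult_sum_right add: sum_agent_proj)
  also have "\<dots> = (\<Sum>p\<in>UNIV. X ** agent_proj mb p ** agent_proj mb p ** Y)"
    by simp
  finally show ?thesis
    by (simp add: blk_eq_agent_proj matrix_mult_sum_left matrix_mult_sum_right matrix_mul_assoc)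
qed

lemma blk_transpose_mult_blk_mult:
  "blk ca cb (transpose X ** blk ra ra S i i ** Y) l j
     = transpose (blk ra ca X i l) ** blk ra ra S i i ** blk ra cb Y i j"
  by (simp add: blk_eq_agent_proj matrix_transpose_mul matrix_mul_assoc)

lemma transpose_blkrow_mult_blk_mult_blkrow:
  "transpose (blkrow ra K i) ** blk ra ra R i i ** blkrow ra K i = transpose K ** blk ra ra R i i ** K"
  by (simp add: blk_eq_agent_proj blkrow_eq_agent_proj matrix_transpose_mul matrix_mul_assoc)

section \<open>Spatial exponential decay\<close>

lemma SED_D: "SED d ra ca c \<gamma> X \<Longrightarrow> opnorm (blk ra ca X l j) \<le> c * exp (- \<gamma> * real (d l j))"
  unfolding SED_def by blast

lemma SED_const_nonneg: "SED d ra ca c \<gamma> X \<Longrightarrow> 0 \<le> c"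
  by (rule nonneg_if_opnorm_le_mult_exp[OF SED_D])

lemma exp_dist_triangle:
  assumes "\<And>x y z. d x z \<le> d x y + d y z" and "0 \<le> \<gamma>"
  shows "exp (- \<gamma> * real (d l p)) * exp (- \<gamma> * real (d p j)) \<le> exp (- \<gamma> * real (d l j))"
proof -
  have "\<gamma> * real (d l j) \<le> \<gamma> * (real (d l p) + real (d p j))"
    using assms by (intro mult_left_mono) (auto simp flip: of_nat_add)
  then show ?thesis
    by (simp flip: exp_add add: algebra_simps)
qed

lemma SED_add:
  assumes "SED d ra ca c1 \<gamma> X" and "SED d ra ca c2 \<gamma> Y"
  shows "SED d ra ca (c1 + c2) \<gamma> (X + Y)"
  unfolding SED_def blk_add distrib_right
  using order_trans[OF opnorm_add add_mono[OF SED_D[OF assms(1)] SED_D[OF assms(2)]]] by blast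

lemma SED_mult:
  fixes X :: "real^'m::finite^'r" and Y :: "real^'c^'m" and mb :: "'m \<Rightarrow> 'a::finite"
  assumes tri: "\<And>x y z. d x z \<le> d x y + d y z" and \<gamma>: "0 \<le> \<gamma>"
    and X: "SED d ra mb cX \<gamma> X" and Y: "SED d mb ca cY \<gamma> Y"
  shows "SED d ra ca (real CARD('a) * cX * cY) \<gamma> (X ** Y)"
  unfolding SED_def
proof (intro allI)
  fix l j
  have cX: "0 \<le> cX"
    using X by (rule SED_const_nonneg)
  have cY: "0 \<le> cY"
    using Y by (rule SED_const_nonneg)
  have term_le: "opnorm (blk ra mb X l p ** blk mb ca Y p j) \<le> cX * cY * exp (- \<gamma> * real (d l j))"
    for p
  proof -
    have "opnorm (blk ra mb X l p ** blk mb ca Y p j)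
        \<le> (cX * exp (- \<gamma> * real (d l p))) * (cY * exp (- \<gamma> * real (d p j)))"
      using cX by (intro order_trans[OF opnorm_mult] mult_mono SED_D[OF X] SED_D[OF Y] opnorm_nonneg) simp
    also have "\<dots> = cX * cY * (exp (- \<gamma> * real (d l p)) * exp (- \<gamma> * real (d p j)))"
      by (simp add: ac_simps)
    also have "\<dots> \<le> cX * cY * exp (- \<gamma> * real (d l j))"
      using cX cY by (intro mult_left_mono exp_dist_triangle[OF tri \<gamma>]) simp
    finally show ?thesis .
  qed
  have "opnorm (blk ra ca (X ** Y) l j) \<le> (\<Sum>p\<in>UNIV. opnorm (blk ra mb X l p ** blk mb ca Y p j))"
    unfolding blk_mult[where mb = mb] by (rule opnorm_sum)
  also have "\<dots> \<le> real CARD('a) * (cX * cY * exp (- \<gamma> * real (d l j)))"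
    using sum_bounded_above[OF term_le] by simp
  finally show "opnorm (blk ra ca (X ** Y) l j) \<le> real CARD('a) * cX * cY * exp (- \<gamma> * real (d l j))"
    by (simp add: ac_simps)
qed

lemma SED_mat1: "(\<And>x. d x x = 0) \<Longrightarrow> SED d ag ag 1 \<gamma> (mat 1)"
  unfolding SED_def blk_mat1 by (simp add: opnorm_agent_proj_le)

lemma SED_mult_matpow:
  fixes Y :: "real^'n::finite^'r" and M :: "real^'n^'n" and ag :: "'n \<Rightarrow> 'a::finite"
  assumes tri: "\<And>x y z. d x z \<le> d x y + d y z" and \<gamma>: "0 \<le> \<gamma>"
    and Y: "SED d ry ag cY \<gamma> Y" and M: "SED d ag ag c \<gamma> M"
  shows "SED d ry ag (cY * (real CARD('a) * c) ^ k) \<gamma> (Y ** matpow M k)"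
  using Y
proof (induction k arbitrary: Y cY)
  case 0
  then show ?case by simp
next
  case (Suc k)
  have "SED d ry ag (real CARD('a) * cY * c) \<gamma> (Y ** M)"
    by (rule SED_mult[OF tri \<gamma> Suc.prems M])
  from Suc.IH[OF this] show ?case
    by (simp add: matrix_mul_assoc ac_simps)
qed

lemma SED_matpow:
  fixes M :: "real^'n::finite^'n" and ag :: "'n \<Rightarrow> 'a::finite"
  assumes "\<And>x. d x x = 0" and "\<And>x y z. d x z \<le> d x y + d y z" and "0 \<le> \<gamma>"
    and "SED d ag ag c \<gamma> M"
  shows "SED d ag ag ((real CARD('a) * c) ^ k) \<gamma> (matpow M k)"
  using SED_mult_matpow[OF assms(2,3) SED_mat1[OF assms(1)] assms(4), of k] by simp

lemma SED_away_D:
  "SED_away d ra ca i c \<gamma> X \<Longrightarrow> opnorm (blk ra ca X l j) \<le> c * exp (- \<gamma> * real (max (d i l) (d i j)))"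
  unfolding SED_away_def by blast

lemma SED_away_const_nonneg: "SED_away d ra ca i c \<gamma> X \<Longrightarrow> 0 \<le> c"
  by (rule nonneg_if_opnorm_le_mult_exp[OF SED_away_D])

lemma SED_away_add:
  assumes "SED_away d ra ca i c1 \<gamma> X" and "SED_away d ra ca i c2 \<gamma> Y"
  shows "SED_away d ra ca i (c1 + c2) \<gamma> (X + Y)"
  unfolding SED_away_def blk_add distrib_right
  using order_trans[OF opnorm_add add_mono[OF SED_away_D[OF assms(1)] SED_away_D[OF assms(2)]]]
  by blast

lemma SED_away_mono:
  assumes "SED_away d ra ca i c \<gamma> X" and "c \<le> c'"
  shows "SED_away d ra ca i c' \<gamma> X"
  unfolding SED_away_def
  using order_trans[OF SED_away_D[OF assms(1)] mult_right_mono[OF assms(2)]] by simp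

lemma SED_away_blk_diag:
  "(\<And>x. d x x = 0) \<Longrightarrow> SED_away d ag ag i (opnorm (blk ag ag X i i)) \<gamma> (blk ag ag X i i)"
  unfolding SED_away_def blk_blk by (simp add: opnorm_nonneg)

lemma exp_congruence_decay_le:
  assumes tri: "\<And>x y z. d x z \<le> d x y + d y z" and "0 \<le> \<gamma>'" and "\<gamma>' \<le> \<gamma>"
  shows "exp (- \<gamma> * real (d p l)) * exp (- \<gamma>' * real (max (d i p) (d i q))) * exp (- \<gamma> * real (d q j))
     \<le> exp (- \<gamma>' * real (max (d i l) (d i j)))"
proof -
  have "real (max (d i l) (d i j)) \<le> real (d p l) + real (max (d i p) (d i q)) + real (d q j)"
    using tri[of i l p] tri[of i j q] by (simp add: max_def)
  then have "\<gamma>' * real (max (d i l) (d i j))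
      \<le> \<gamma>' * real (d p l) + \<gamma>' * real (max (d i p) (d i q)) + \<gamma>' * real (d q j)"
    using assms(2) by (simp add: mult_left_mono flip: distrib_left)
  also have "\<dots> \<le> \<gamma> * real (d p l) + \<gamma>' * real (max (d i p) (d i q)) + \<gamma> * real (d q j)"
    using assms(3) by (intro add_mono mult_right_mono) simp_all
  finally show ?thesis
    by (simp flip: exp_add add: algebra_simps)
qed

lemma SED_away_congruence:
  fixes X :: "real^'c1^'r::finite" and Z :: "real^'c2^'r" and P :: "real^'r^'r"
    and rx :: "'r \<Rightarrow> 'a::finite"
  assumes tri: "\<And>x y z. d x z \<le> d x y + d y z" and \<gamma>': "0 \<le> \<gamma>'" "\<gamma>' \<le> \<gamma>"
    and X: "SED d rx ra cX \<gamma> X" and Z: "SED d rx rb cZ \<gamma> Z" and P: "SED_away d rx rx i cP \<gamma>' P"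
  shows "SED_away d ra rb i ((real CARD('a))\<^sup>2 * cX * cZ * cP) \<gamma>' (transpose X ** P ** Z)"
  unfolding SED_away_def
proof (intro allI)
  fix l j
  let ?e = "exp (- \<gamma>' * real (max (d i l) (d i j)))"
  let ?B = "\<lambda>p q. transpose (blk rx ra X p l) ** blk rx rx P p q ** blk rx rb Z q j"
  have c: "0 \<le> cX" "0 \<le> cZ" "0 \<le> cP"
    using SED_const_nonneg[OF X] SED_const_nonneg[OF Z] SED_away_const_nonneg[OF P] .
  have term_le: "opnorm (?B p q) \<le> cX * cZ * cP * ?e" for p q
  proof -
    have "opnorm (?B p q) \<le> cX * exp (- \<gamma> * real (d p l)) * (cP * exp (- \<gamma>' * real (max (d i p) (d i q))))
                          * (cZ * exp (- \<gamma> * real (d q j)))"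
      by (rule opnorm_transpose_mult3_le[OF SED_D[OF X] SED_away_D[OF P] SED_D[OF Z]])
    also have "\<dots> = cX * cZ * cP * (exp (- \<gamma> * real (d p l)) * exp (- \<gamma>' * real (max (d i p) (d i q)))
                          * exp (- \<gamma> * real (d q j)))"
      by (simp add: ac_simps)
    also have "\<dots> \<le> cX * cZ * cP * ?e"
      using c by (intro mult_left_mono exp_congruence_decay_le[OF tri \<gamma>']) simp
    finally show ?thesis .
  qed
  have blocks: "blk ra rb (transpose X ** P ** Z) l j = (\<Sum>q\<in>UNIV. \<Sum>p\<in>UNIV. ?B p q)"
    by (simp add: blk_mult[where mb = rx] blk_transpose matrix_mult_sum_right)
  have "opnorm (blk ra rb (transpose X ** P ** Z) l j) \<le> (\<Sum>q\<in>UNIV. \<Sum>p\<in>UNIV. opnorm (?B p q))"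
    unfolding blocks by (rule order_trans[OF opnorm_sum sum_mono[OF opnorm_sum]])
  also have "\<dots> \<le> real CARD('a) * (real CARD('a) * (cX * cZ * cP * ?e))"
    using sum_bounded_above[OF sum_bounded_above[OF term_le]] by simp
  finally show "opnorm (blk ra rb (transpose X ** P ** Z) l j) \<le> (real CARD('a))\<^sup>2 * cX * cZ * cP * ?e"
    by (simp add: power2_eq_square ac_simps)
qed

section \<open>The Lyapunov equation\<close>

lemma lyapunov_expansion:
  assumes lyap: "P = Q + transpose M ** P ** M"
  shows "P = (\<Sum>k<n. transpose (matpow M k) ** Q ** matpow M k)
             + transpose (matpow M n) ** P ** matpow M n"
proof (induction n)
  case 0
  then show ?case by simp
next
  case (Suc n)
  let ?Mn = "matpow M n"
  have "transpose ?Mn ** P ** ?Mn = transpose ?Mn ** (Q + transpose M ** P ** M) ** ?Mn"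
    by (rule arg_cong[where f = "\<lambda>X. transpose ?Mn ** X ** ?Mn", OF lyap])
  also have "\<dots> = transpose ?Mn ** Q ** ?Mn + transpose (matpow M (Suc n)) ** P ** matpow M (Suc n)"
    by (simp add: matrix_add_ldistrib matrix_add_rdistrib matrix_transpose_mul matrix_mul_assoc)
  finally show ?case
    using Suc.IH by (simp add: add.assoc)
qed

lemma opnorm_congruence_matpow_le:
  assumes "stable \<tau> \<rho> M"
  shows "opnorm (transpose (matpow M k) ** X ** matpow M k) \<le> opnorm X * \<tau>\<^sup>2 * exp (- 2 * \<rho>) ^ k"
proof -
  have Mk: "opnorm (matpow M k) \<le> \<tau> * exp (- \<rho> * real k)"
    using assms unfolding stable_def by blast
  have "opnorm (transpose (matpow M k) ** X ** matpow M k)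
      \<le> \<tau> * exp (- \<rho> * real k) * opnorm X * (\<tau> * exp (- \<rho> * real k))"
    by (rule opnorm_transpose_mult3_le[OF Mk order_refl Mk])
  also have "\<dots> = opnorm X * \<tau>\<^sup>2 * exp (- 2 * \<rho>) ^ k"
    by (simp add: power2_eq_square algebra_simps flip: exp_add exp_of_nat_mult)
  finally show ?thesis .
qed

lemma sum_power_atLeastLessThan_le:
  fixes q :: real
  assumes "0 \<le> q" and "q < 1"
  shows "(\<Sum>k\<in>{m..<n}. q ^ k) \<le> q ^ m / (1 - q)"
proof (cases "m \<le> n")
  case True
  have "(\<Sum>k\<in>{m..<n}. q ^ k) = q ^ m * (\<Sum>k<n - m. q ^ k)"
    using True sum.shift_bounds_nat_ivl[of "power q" 0 m "n - m"]
    by (simp add: power_add sum_distrib_left lessThan_atLeast0 ac_simps)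
  also have "\<dots> \<le> q ^ m * (1 / (1 - q))"
  proof (rule mult_left_mono)
    show "(\<Sum>k<n - m. q ^ k) \<le> 1 / (1 - q)"
      using assms by (simp add: sum_gp_strict divide_right_mono)
  qed (use assms in simp)
  finally show ?thesis
    by simp
qed (use assms in simp)

lemma lyapunov_tail_le:
  assumes lyap: "P = Q + transpose M ** P ** M" and stab: "stable \<tau> \<rho> M" and \<rho>: "0 < \<rho>"
  shows "opnorm (P - (\<Sum>k<m. transpose (matpow M k) ** Q ** matpow M k))
           \<le> opnorm Q * \<tau>\<^sup>2 * exp (- 2 * \<rho>) ^ m / (1 - exp (- 2 * \<rho>))"
proof -
  let ?T = "\<lambda>k. transpose (matpow M k) ** Q ** matpow M k"
  let ?q = "exp (- 2 * \<rho>)"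
  let ?bound = "opnorm Q * \<tau>\<^sup>2 * ?q ^ m / (1 - ?q)"
  have q: "0 \<le> ?q" "?q < 1"
    using \<rho> by auto
  have approx: "opnorm (P - (\<Sum>k<m. ?T k)) \<le> ?bound + opnorm P * \<tau>\<^sup>2 * ?q ^ n" if "m \<le> n" for n
  proof -
    have "(\<Sum>k<n. ?T k) = (\<Sum>k<m. ?T k) + (\<Sum>k\<in>{m..<n}. ?T k)"
      using that by (simp add: lessThan_atLeast0 sum.atLeastLessThan_concat)
    then have tail: "P - (\<Sum>k<m. ?T k) = (\<Sum>k\<in>{m..<n}. ?T k) + transpose (matpow M n) ** P ** matpow M n"
      using lyapunov_expansion[OF lyap, of n] by (simp add: algebra_simps)
    have "opnorm (P - (\<Sum>k<m. ?T k))
        \<le> (\<Sum>k\<in>{m..<n}. opnorm (?T k)) + opnorm (transpose (matpow M n) ** P ** matpow M n)"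
      unfolding tail by (rule order_trans[OF opnorm_add add_right_mono[OF opnorm_sum]])
    also have "\<dots> \<le> (\<Sum>k\<in>{m..<n}. opnorm Q * \<tau>\<^sup>2 * ?q ^ k) + opnorm P * \<tau>\<^sup>2 * ?q ^ n"
      by (intro add_mono sum_mono opnorm_congruence_matpow_le[OF stab])
    also have "(\<Sum>k\<in>{m..<n}. opnorm Q * \<tau>\<^sup>2 * ?q ^ k) \<le> ?bound"
      using mult_left_mono[OF sum_power_atLeastLessThan_le[OF q, of m n], of "opnorm Q * \<tau>\<^sup>2"]
      by (simp add: sum_distrib_left opnorm_nonneg)
    finally show ?thesis
      by simp
  qed
  have "(\<lambda>n. ?bound + opnorm P * \<tau>\<^sup>2 * ?q ^ n) \<longlonglongrightarrow> ?bound + opnorm P * \<tau>\<^sup>2 * 0"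
    using q by (intro tendsto_intros LIMSEQ_power_zero) simp
  then have "(\<lambda>n. ?bound + opnorm P * \<tau>\<^sup>2 * ?q ^ n) \<longlonglongrightarrow> ?bound"
    by simp
  then show ?thesis
    by (rule LIMSEQ_le_const) (use approx in blast)
qed

lemma opnorm_blk_lyapunov_term_le:
  fixes M :: "real^'n::finite^'n" and K :: "real^'n^'m::finite"
    and agx :: "'n \<Rightarrow> 'a::finite" and agu :: "'m \<Rightarrow> 'a"
  assumes d_refl: "\<And>x. d x x = 0" and tri: "\<And>x y z. d x z \<le> d x y + d y z" and \<gamma>: "0 \<le> \<gamma>"
    and M: "SED d agx agx cM \<gamma> M" and K: "SED d agu agx cK \<gamma> K"
  shows "opnorm (blk agx agx (transpose (matpow M k)
             ** (blk agx agx S i i + transpose (blkrow agu K i) ** blk agu agu R i i ** blkrow agu K i)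
             ** matpow M k) l j)
     \<le> (opnorm (blk agx agx S i i) + opnorm (blk agu agu R i i) * cK\<^sup>2) * ((real CARD('a) * cM)\<^sup>2) ^ k
        * exp (- \<gamma> * real (d i l)) * exp (- \<gamma> * real (d i j))"
proof -
  let ?C = "real CARD('a) * cM" and ?Mk = "matpow M k"
  let ?Si = "blk agx agx S i i" and ?Ri = "blk agu agu R i i"
  let ?el = "exp (- \<gamma> * real (d i l))" and ?ej = "exp (- \<gamma> * real (d i j))"
  have Mk: "SED d agx agx (?C ^ k) \<gamma> ?Mk"
    by (rule SED_matpow[OF d_refl tri \<gamma> M])
  have KMk: "SED d agu agx (cK * ?C ^ k) \<gamma> (K ** ?Mk)"
    by (rule SED_mult_matpow[OF tri \<gamma> K M])
  have "transpose ?Mk ** (?Si + transpose K ** ?Ri ** K) ** ?Mk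
      = transpose ?Mk ** ?Si ** ?Mk + transpose (K ** ?Mk) ** ?Ri ** (K ** ?Mk)"
    by (simp add: matrix_add_ldistrib matrix_add_rdistrib matrix_transpose_mul matrix_mul_assoc)
  then have "blk agx agx (transpose ?Mk ** (?Si + transpose (blkrow agu K i) ** ?Ri ** blkrow agu K i)
               ** ?Mk) l j
      = transpose (blk agx agx ?Mk i l) ** ?Si ** blk agx agx ?Mk i j
        + transpose (blk agu agx (K ** ?Mk) i l) ** ?Ri ** blk agu agx (K ** ?Mk) i j"
    by (simp add: transpose_blkrow_mult_blk_mult_blkrow blk_add blk_transpose_mult_blk_mult)
  also have "opnorm \<dots> \<le> ?C ^ k * ?el * opnorm ?Si * (?C ^ k * ?ej)
                        + cK * ?C ^ k * ?el * opnorm ?Ri * (cK * ?C ^ k * ?ej)"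
    by (intro order_trans[OF opnorm_add] add_mono opnorm_transpose_mult3_le SED_D[OF Mk]
        SED_D[OF KMk] order_refl)
  also have "\<dots> = (opnorm ?Si + opnorm ?Ri * cK\<^sup>2) * (?C\<^sup>2) ^ k * ?el * ?ej"
    by (simp add: power2_eq_square power_mult_distrib algebra_simps)
  finally show ?thesis .
qed

lemma decay_rate_nonneg:
  fixes \<rho> \<gamma> C :: real
  shows "0 < \<rho> \<Longrightarrow> 0 \<le> \<gamma> \<Longrightarrow> 1 \<le> C \<Longrightarrow> 0 \<le> \<rho> * \<gamma> / (\<rho> + ln C)"
  by simp

lemma decay_rate_le:
  fixes \<rho> \<gamma> C :: real
  assumes "0 < \<rho>" and "0 \<le> \<gamma>" and "1 \<le> C"
  shows "\<rho> * \<gamma> / (\<rho> + ln C) \<le> \<gamma>"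
proof -
  have L: "0 \<le> ln C"
    using assms(3) by simp
  then have "\<rho> * \<gamma> \<le> \<gamma> * (\<rho> + ln C)"
    using assms(2) by (simp add: algebra_simps)
  then show ?thesis
    using assms(1) L by (simp add: pos_divide_le_eq)
qed

lemma exp_power_nat_ceiling_le:
  fixes \<rho> x :: real
  assumes "0 < \<rho>"
  shows "exp (- 2 * \<rho>) ^ nat \<lceil>x / (2 * \<rho>)\<rceil> \<le> exp (- x)"
proof -
  have "x \<le> real (nat \<lceil>x / (2 * \<rho>)\<rceil>) * (2 * \<rho>)"
    using real_nat_ceiling_ge[of "x / (2 * \<rho>)"] assms by (simp add: pos_divide_le_eq)
  then show ?thesis
    by (simp flip: exp_of_nat_mult)
qed

lemma power_horizon_decay_le:
  fixes \<rho> \<gamma> C D :: real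
  assumes \<rho>: "0 < \<rho>" and \<gamma>: "0 \<le> \<gamma>" and C: "1 \<le> C" and D: "0 \<le> D"
  defines "\<gamma>' \<equiv> \<rho> * \<gamma> / (\<rho> + ln C)"
  defines "k \<equiv> nat \<lceil>\<gamma>' * D / (2 * \<rho>)\<rceil>"
  shows "(C\<^sup>2) ^ (k - 1) * exp (- \<gamma> * D) \<le> exp (- \<gamma>' * D)"
proof -
  have L: "0 \<le> ln C"
    using C by simp
  have horizon: "real (k - 1) * (2 * ln C) \<le> (\<gamma> - \<gamma>') * D"
  proof (cases "k = 0")
    case True
    then show ?thesis
      unfolding \<gamma>'_def using decay_rate_le[OF \<rho> \<gamma> C] D by simp
  next
    case False
    have "real k = of_int \<lceil>\<gamma>' * D / (2 * \<rho>)\<rceil>"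
      using False by (simp add: k_def)
    then have "real (k - 1) \<le> \<gamma>' * D / (2 * \<rho>)"
      using False of_int_ceiling_diff_one_le[of "\<gamma>' * D / (2 * \<rho>)"] by (simp add: of_nat_diff)
    then have "real (k - 1) * (2 * ln C) \<le> \<gamma>' * D / (2 * \<rho>) * (2 * ln C)"
      using L by (intro mult_right_mono) auto
    also have "\<dots> = (\<gamma> - \<gamma>') * D"
    proof -
      have "0 < \<rho> + ln C"
        using \<rho> L by auto
      then show ?thesis
        unfolding \<gamma>'_def using \<rho> by (simp add: divide_simps) (simp add: algebra_simps)
    qed
    finally show ?thesis .
  qed
  have "exp (2 * ln C) = C\<^sup>2"
    using C exp_of_nat_mult[of 2 "ln C"] by simp
  then have "(C\<^sup>2) ^ (k - 1) = exp (real (k - 1) * (2 * ln C))"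
    by (simp add: exp_of_nat_mult)
  then show ?thesis
    using horizon by (simp flip: exp_add add: algebra_simps)
qed

lemma sum_power_lessThan_le_twice_last:
  fixes x :: real
  assumes "2 \<le> x"
  shows "(\<Sum>k<n. x ^ k) \<le> 2 * x ^ (n - 1)"
proof (induction n)
  case 0
  then show ?case by simp
next
  case (Suc n)
  show ?case
  proof (cases n)
    case 0
    then show ?thesis by simp
  next
    case (Suc n')
    have "(\<Sum>k<Suc n. x ^ k) \<le> 2 * x ^ n' + x ^ n"
      using Suc.IH \<open>n = Suc n'\<close> by simp
    also have "\<dots> \<le> x * x ^ n' + x ^ n"
      using assms by (intro add_right_mono mult_right_mono) auto
    finally show ?thesis
      using \<open>n = Suc n'\<close> by simp
  qed
qed

lemma sum_before_horizon_le:
  fixes d :: "'a::finite \<Rightarrow> 'a \<Rightarrow> nat" and t :: "nat \<Rightarrow> real"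
  assumes d_refl: "\<And>x. d x x = 0" and \<gamma>: "0 \<le> \<gamma>" and \<rho>: "0 < \<rho>"
    and C: "real CARD('a) \<le> C" and s: "0 \<le> s"
    and t_le: "\<And>k. t k \<le> s * (C\<^sup>2) ^ k * exp (- \<gamma> * real (d i l)) * exp (- \<gamma> * real (d i j))"
  defines "\<gamma>' \<equiv> \<rho> * \<gamma> / (\<rho> + ln C)" and "D \<equiv> real (max (d i l) (d i j))"
  shows "(\<Sum>k<nat \<lceil>\<gamma>' * D / (2 * \<rho>)\<rceil>. t k) \<le> 2 * s * exp (- \<gamma>' * D)"
proof -
  define k where "k = nat \<lceil>\<gamma>' * D / (2 * \<rho>)\<rceil>"
  let ?e = "exp (- \<gamma> * real (d i l)) * exp (- \<gamma> * real (d i j))"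
  have C1: "1 \<le> C"
    using C by (rule order_trans[rotated]) simp
  have D0: "0 \<le> D"
    by (simp add: D_def)
  have "(\<Sum>k'<k. t k') \<le> 2 * s * exp (- \<gamma>' * D)"
  proof (cases "k = 0")
    case True
    then show ?thesis
      using s by simp
  next
    case False
    then have "D \<noteq> 0"
      by (auto simp: k_def)
    then have "l \<noteq> i \<or> j \<noteq> i"
      using d_refl by (auto simp: D_def)
    then have "\<not> CARD('a) \<le> 1"
      using card_le_Suc0_iff_eq[of "UNIV :: 'a set"] by auto
    then have "2 \<le> C"
      using C by linarith
    then have C2: "2 \<le> C\<^sup>2"
      by (simp add: power2_eq_square order_trans[OF _ mult_mono[of 2 C 1 C]])
    have "\<gamma> * D \<le> \<gamma> * (real (d i l) + real (d i j))"
      unfolding D_def using \<gamma> by (intro mult_left_mono) auto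
    then have e_le: "?e \<le> exp (- \<gamma> * D)"
      by (simp flip: exp_add add: algebra_simps)
    have "(\<Sum>k'<k. t k') \<le> (\<Sum>k'<k. s * ?e * (C\<^sup>2) ^ k')"
      by (intro sum_mono order_trans[OF t_le]) (simp add: ac_simps)
    also have "\<dots> = s * ?e * (\<Sum>k'<k. (C\<^sup>2) ^ k')"
      by (simp add: sum_distrib_left)
    also have "\<dots> \<le> s * ?e * (2 * (C\<^sup>2) ^ (k - 1))"
      using s by (intro mult_left_mono sum_power_lessThan_le_twice_last[OF C2]) simp
    also have "\<dots> = 2 * s * ((C\<^sup>2) ^ (k - 1) * ?e)"
      by (simp add: ac_simps)
    also have "\<dots> \<le> 2 * s * ((C\<^sup>2) ^ (k - 1) * exp (- \<gamma> * D))"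
      using s e_le by (intro mult_left_mono) simp_all
    also have "\<dots> \<le> 2 * s * exp (- \<gamma>' * D)"
      using s power_horizon_decay_le[OF \<rho> \<gamma> C1 D0, folded \<gamma>'_def, folded k_def]
      by (intro mult_left_mono) simp_all
    finally show ?thesis .
  qed
  then show ?thesis
    by (simp add: k_def)
qed

lemma lyapunov_solution_SED_away:
  fixes M Q P :: "real^'n::finite^'n" and ag :: "'n \<Rightarrow> 'a::finite"
  assumes d_refl: "\<And>x. d x x = 0" and \<gamma>: "0 \<le> \<gamma>" and \<rho>: "0 < \<rho>"
    and stab: "stable \<tau> \<rho> M" and lyap: "P = Q + transpose M ** P ** M"
    and C: "real CARD('a) \<le> C"
    and term_le: "\<And>k l j. opnorm (blk ag ag (transpose (matpow M k) ** Q ** matpow M k) l j)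
                     \<le> s * (C\<^sup>2) ^ k * exp (- \<gamma> * real (d i l)) * exp (- \<gamma> * real (d i j))"
  shows "SED_away d ag ag i (opnorm Q * \<tau>\<^sup>2 / (1 - exp (- 2 * \<rho>)) + 2 * s) (\<rho> * \<gamma> / (\<rho> + ln C)) P"
  unfolding SED_away_def
proof (intro allI)
  fix l j
  let ?T = "\<lambda>k. transpose (matpow M k) ** Q ** matpow M k"
  let ?\<gamma>' = "\<rho> * \<gamma> / (\<rho> + ln C)" and ?D = "real (max (d i l) (d i j))"
  let ?c = "opnorm Q * \<tau>\<^sup>2 / (1 - exp (- 2 * \<rho>))"
  define k where "k = nat \<lceil>?\<gamma>' * ?D / (2 * \<rho>)\<rceil>"
  have s: "0 \<le> s"
    using order_trans[OF opnorm_nonneg term_le[of 0 i i]] by (simp add: d_refl)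
  have head: "(\<Sum>k'<k. opnorm (blk ag ag (?T k') l j)) \<le> 2 * s * exp (- ?\<gamma>' * ?D)"
    unfolding k_def
    by (rule sum_before_horizon_le[where t = "\<lambda>k. opnorm (blk ag ag (?T k) l j)",
          OF d_refl \<gamma> \<rho> C s term_le])
  have "opnorm (blk ag ag (P - (\<Sum>k'<k. ?T k')) l j)
      \<le> opnorm Q * \<tau>\<^sup>2 * exp (- 2 * \<rho>) ^ k / (1 - exp (- 2 * \<rho>))"
    by (rule order_trans[OF opnorm_blk_le lyapunov_tail_le[OF lyap stab \<rho>]])
  also have "\<dots> = ?c * exp (- 2 * \<rho>) ^ k"
    by simp
  also have "\<dots> \<le> ?c * exp (- ?\<gamma>' * ?D)"
    using \<rho> exp_power_nat_ceiling_le[OF \<rho>, of "?\<gamma>' * ?D"]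
    by (intro mult_left_mono) (auto simp: k_def opnorm_nonneg)
  finally have tail: "opnorm (blk ag ag (P - (\<Sum>k'<k. ?T k')) l j) \<le> ?c * exp (- ?\<gamma>' * ?D)" .
  have split: "blk ag ag P l j
      = (\<Sum>k'<k. blk ag ag (?T k') l j) + blk ag ag (P - (\<Sum>k'<k. ?T k')) l j"
    by (simp flip: blk_sum blk_add)
  have "opnorm (blk ag ag P l j)
      \<le> (\<Sum>k'<k. opnorm (blk ag ag (?T k') l j)) + opnorm (blk ag ag (P - (\<Sum>k'<k. ?T k')) l j)"
    unfolding split by (rule order_trans[OF opnorm_add add_right_mono[OF opnorm_sum]])
  also have "\<dots> \<le> (?c + 2 * s) * exp (- ?\<gamma>' * ?D)"
    using add_mono[OF head tail] by (simp add: algebra_simps)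
  finally show "opnorm (blk ag ag P l j) \<le> (?c + 2 * s) * exp (- ?\<gamma>' * ?D)" .
qed

theorem corollary1:
  fixes d :: "'a::finite \<Rightarrow> 'a \<Rightarrow> nat"
    and agx :: "'n::finite \<Rightarrow> 'a" and agu :: "'m::finite \<Rightarrow> 'a"
    and A :: "real^'n^'n" and B :: "real^'m^'n" and K :: "real^'n^'m"
    and S :: "real^'n^'n" and R :: "real^'m^'m" and P :: "real^'n^'n"
    and \<gamma>sys cA cB cK \<tau> \<rho> :: real and \<kappa> :: nat and i :: 'a
  assumes d_refl: "\<And>x. d x x = 0"
    and d_sym: "\<And>x y. d x y = d y x"
    and d_tri: "\<And>x y z. d x z \<le> d x y + d y z"
    and \<gamma>sys_pos: "\<gamma>sys > 0" and \<kappa>_ge: "\<kappa> \<ge> 1"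
    and A_SED: "SED d agx agx cA \<gamma>sys A" and cA_ge: "cA \<ge> 1"
    and B_SED: "SED d agx agu cB \<gamma>sys B" and cB_ge: "cB \<ge> 1"
    and K_sparse: "in_Kkappa d agu agx \<kappa> K"
    and K_SED: "SED d agu agx cK \<gamma>sys K"
    and \<rho>_pos: "\<rho> > 0"
    and stab: "stable \<tau> \<rho> (A + B ** K)"
    and S_bd: "block_diag agx S" and S_psd: "\<And>j. block_psd agx S j"
    and R_bd: "block_diag agu R" and R_pd: "\<And>j. block_pd agu R j"
    and lyap: "P = blk agx agx S i i
                   + transpose (blkrow agu K i) ** blk agu agu R i i ** blkrow agu K i
                   + transpose (A + B ** K) ** P ** (A + B ** K)"
  defines "N \<equiv> real CARD('a)"
    and "Si \<equiv> blk agx agx S i i"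
    and "Ri \<equiv> blk agu agu R i i"
  defines "cP \<equiv> opnorm (Si + transpose (blkrow agu K i) ** Ri ** blkrow agu K i) * \<tau>\<^sup>2
                    / (1 - exp (- 2 * \<rho>))
                 + 2 * (opnorm Si + opnorm Ri * cK\<^sup>2)"
    and "\<gamma>P \<equiv> \<rho> * \<gamma>sys / (\<rho> + ln (N * cA + N\<^sup>2 * cB * cK))"
  defines "cH \<equiv> max (opnorm Si + N\<^sup>2 * cA\<^sup>2 * cP)
                   (max (N\<^sup>2 * cA * cB * cP) (opnorm Ri + N\<^sup>2 * cB\<^sup>2 * cP))"
  shows "SED_away d agx agx i cH \<gamma>P (Si + transpose A ** P ** A)
       \<and> SED_away d agx agu i cH \<gamma>P (transpose A ** P ** B)
       \<and> SED_away d agu agu i cH \<gamma>P (Ri + transpose B ** P ** B)"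
proof -
  let ?cM = "cA + N * cB * cK"
  have \<gamma>: "0 \<le> \<gamma>sys"
    using \<gamma>sys_pos by simp
  have M_SED: "SED d agx agx ?cM \<gamma>sys (A + B ** K)"
    unfolding N_def by (intro SED_add A_SED SED_mult[OF d_tri \<gamma> B_SED K_SED])
  have "1 \<le> ?cM"
    using cA_ge cB_ge SED_const_nonneg[OF K_SED] by (simp add: N_def add_increasing2)
  then have C: "real CARD('a) \<le> N * ?cM"
    using mult_left_mono[of 1 ?cM N] by (simp add: N_def)
  have \<gamma>P_eq: "\<gamma>P = \<rho> * \<gamma>sys / (\<rho> + ln (N * ?cM))"
    by (simp add: \<gamma>P_def power2_eq_square algebra_simps)
  have P_SED: "SED_away d agx agx i cP \<gamma>P P"
    unfolding cP_def \<gamma>P_eq Si_def Ri_def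
    by (rule lyapunov_solution_SED_away[OF d_refl \<gamma> \<rho>_pos stab lyap C
          opnorm_blk_lyapunov_term_le[OF d_refl d_tri \<gamma> M_SED K_SED, folded N_def]])
  have C1: "1 \<le> N * ?cM"
    using C by (rule order_trans[rotated]) simp
  have \<gamma>P: "0 \<le> \<gamma>P" "\<gamma>P \<le> \<gamma>sys"
    unfolding \<gamma>P_eq using decay_rate_nonneg[OF \<rho>_pos \<gamma> C1] decay_rate_le[OF \<rho>_pos \<gamma> C1] .
  note congruence = SED_away_congruence[OF d_tri \<gamma>P _ _ P_SED, folded N_def]
  show ?thesis
  proof (intro conjI)
    show "SED_away d agx agx i cH \<gamma>P (Si + transpose A ** P ** A)"
      unfolding Si_def
      by (rule SED_away_mono[OF SED_away_add[OF SED_away_blk_diag[OF d_refl]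
            congruence[OF A_SED A_SED]]])
        (simp add: cH_def Si_def power2_eq_square)
    show "SED_away d agx agu i cH \<gamma>P (transpose A ** P ** B)"
      by (rule SED_away_mono[OF congruence[OF A_SED B_SED]]) (simp add: cH_def)
    show "SED_away d agu agu i cH \<gamma>P (Ri + transpose B ** P ** B)"
      unfolding Ri_def
      by (rule SED_away_mono[OF SED_away_add[OF SED_away_blk_diag[OF d_refl]
            congruence[OF B_SED B_SED]]])
        (simp add: cH_def Ri_def power2_eq_square)
  qed
qed

end
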